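(* Let $b\ge 2$ be an integer and $d\in\{0,1,\dots,b-1\}$. For $i\ge1$ put $\gamma_i=\sum_{0\le a<b,\ a\ne d}a^i$. Define $u_{0;0}=b$ and, for $m\ge1$, define $u_{0;m}$ recursively by $$(b^{m+1}-b+1)\,u_{0;m}=\sum_{i=1}^{m}\binom{m}{i}\gamma_i\,u_{0;m-i}.$$ For $j\ge1$ and $m\ge0$ define $u_{j;m}$ recursively by $$(b^{m+1}-b+1)\,u_{j;m}=\sum_{i=1}^{m}\binom{m}{i}\gamma_i\,u_{j;m-i}+\sum_{i=0}^{m}\binom{m}{i}d^i\,u_{j-1;m-i}$$ (with the convention $0^0=1$). In particular $u_{j;0}=b$ for all $j\ge0$. Then for every $k\ge0$ and every $l\ge1$, $$H^{(k)}=\sum_{\substack{0<n<b^{l-1}\\ k(n)=k}}\frac1n\;+\;b\sum_{\substack{b^{l-1}\le n<b^{l}\\ k(n)\le k}}\frac1n\;+\;\sum_{m=1}^{\infty}(-1)^m\sum_{\substack{b^{l-1}\le n<b^{l}\\ k(n)\le k}}\frac{u_{k-k(n);m}}{n^{m+1}}.$$ Moreover, the numbers $u_{j;m}$ ($j\ge0$, $m\ge1$) satisfy: (i) $u_{j;m}\ge0$, with $u_{j;m}=0$ only if $j=0$, $b=2$ and $d=1$; (ii) for all $j\ge 0$, $m\ge0$: $u_{j;m+1}\le u_{j;m}$, with strict inequality unless both are $0$; (iii) for each fixed $m\ge1$, the sequence $(u_{j;m})_{j\ge0}$ is strictly increasing and converges to $b/(m+1)$.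
   Context: For an integer $n\ge0$, its (minimal) base-$b$ representation is the string of base-$b$ digits of $n$ without leading zeros (the empty string for $n=0$); $k(n)$ denotes the number of occurrences of the digit $d$ in this representation. For $k\ge0$, the Irwin sum is $H^{(k)}=\sum_{n\ge1,\ k(n)=k}1/n$ (a convergent series of positive terms; it equals $0$ when $b=2$, $d=1$, $k=0$, the series being empty). *)

theory Defs
  imports Complex_Main
begin

fun digit_count :: "nat \<Rightarrow> nat \<Rightarrow> nat \<Rightarrow> nat" where
  "digit_count b d n =
     (if n = 0 \<or> b < 2 then 0
      else (if n mod b = d then 1 else 0) + digit_count b d (n div b))"

definition irwin_sum :: "nat \<Rightarrow> nat \<Rightarrow> nat \<Rightarrow> real" where
  "irwin_sum b d k = (\<Sum>n. if 1 \<le> n \<and> digit_count b d n = k then 1 / real n else 0)"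

definition gamma_pow :: "nat \<Rightarrow> nat \<Rightarrow> nat \<Rightarrow> real" where
  "gamma_pow b d i = (\<Sum>a\<in>{a. a < b \<and> a \<noteq> d}. real a ^ i)"

function u_coef :: "nat \<Rightarrow> nat \<Rightarrow> nat \<Rightarrow> nat \<Rightarrow> real" where
  "u_coef b d j m =
     (if j = 0 \<and> m = 0 then real b
      else ((\<Sum>i=1..m. real (m choose i) * gamma_pow b d i * u_coef b d j (m - i))
            + (if j = 0 then 0
               else (\<Sum>i=0..m. real (m choose i) * real d ^ i * u_coef b d (j - 1) (m - i))))
           / (real b ^ (m + 1) - real b + 1))"
  by pat_completeness auto
termination
  by (relation "measures [\<lambda>(b,d,j,m). j, \<lambda>(b,d,j,m). m]") auto

end

theory Submission
  imports Defs "HOL-Analysis.Uniform_Limit"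
begin

text \<open>
  Every \<open>n \<ge> b\<^sup>l\<^sup>-\<^sup>1\<close> is uniquely a prefix \<open>n\<^sub>0 \<in> [b\<^sup>l\<^sup>-\<^sup>1, b\<^sup>l)\<close> followed by a block of
  \<open>r \<ge> 0\<close> further digits \<open>t < b\<^sup>r\<close>, and the digit count of \<open>n\<close> is that of \<open>n\<^sub>0\<close> plus the
  occurrences of \<open>d\<close> in the block. So \<open>H\<^sup>(\<^sup>k\<^sup>)\<close> is the finite sum below \<open>b\<^sup>l\<^sup>-\<^sup>1\<close> plus, for each
  prefix, \<open>\<Sum>\<^sub>r \<Sum>\<^sub>t 1 / (n\<^sub>0 b\<^sup>r + t)\<close> over the blocks containing \<open>d\<close> exactly \<open>k - k(n\<^sub>0)\<close> times.
  Expanding \<open>1 / (n\<^sub>0 b\<^sup>r + t) = b\<^sup>-\<^sup>r / (n\<^sub>0 + t / b\<^sup>r)\<close> geometrically turns this into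
  \<open>\<Sum>\<^sub>m (-1)\<^sup>m u\<^sub>j\<^sub>;\<^sub>m / n\<^sub>0\<^sup>m\<^sup>+\<^sup>1\<close>, because \<open>u\<^sub>j\<^sub>;\<^sub>m\<close> is the moment \<open>\<Sum>\<^sub>r b\<^sup>-\<^sup>r \<Sum>\<^sub>t (t / b\<^sup>r)\<^sup>m\<close>
  over the blocks with exactly \<open>j\<close> digits \<open>d\<close>: splitting off the leading digit of a block shows
  that these moments satisfy the recursion defining \<open>u\<close>. The remainder of the expansion after
  \<open>P\<close> terms is bounded by \<open>u\<^sub>j\<^sub>;\<^sub>P\<close>, which tends to \<open>0\<close> by dominated convergence.

  The moment representation also shows that \<open>u\<^sub>j\<^sub>;\<^sub>m\<close> decreases in \<open>m\<close>. The difference of two consecutive levels \<open>j\<close> satisfies the same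
  recursion with a positive source term, hence is positive, and the limit \<open>b / (m + 1)\<close> is
  the only solution of the limiting recursion, by \<open>\<Sum>\<^sub>a\<^sub><\<^sub>b ((a + 1)\<^sup>m\<^sup>+\<^sup>1 - a\<^sup>m\<^sup>+\<^sup>1) = b\<^sup>m\<^sup>+\<^sup>1\<close>.
\<close>

lemma sum_atLeastLessThan_mult_blocks:
  fixes g :: "nat \<Rightarrow> 'a::comm_monoid_add"
  assumes "lo \<le> hi"
  shows "(\<Sum>N\<in>{lo*K..<hi*K}. g N) = (\<Sum>n\<in>{lo..<hi}. \<Sum>s<K. g (n*K + s))"
  using assms
proof (induction hi rule: dec_induct)
  case base
  then show ?case by simp
next
  case (step hi)
  have "(\<Sum>N\<in>{hi*K..<hi*K+K}. g N) = (\<Sum>s<K. g (hi*K + s))"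
    using sum.shift_bounds_nat_ivl[of g 0 "hi*K" K] by (simp add: atLeast0LessThan add.commute)
  moreover have "(\<Sum>N\<in>{lo*K..<Suc hi*K}. g N) = (\<Sum>N\<in>{lo*K..<hi*K}. g N) + (\<Sum>N\<in>{hi*K..<hi*K+K}. g N)"
    using step.hyps by (simp add: sum.atLeastLessThan_concat[symmetric] add.commute)
  ultimately show ?case using step.IH step.hyps by simp
qed

lemma sums_if_nonneg_subseq_partial_sums:
  fixes f :: "nat \<Rightarrow> real"
  assumes nonneg: "\<And>n. 0 \<le> f n" and "strict_mono h"
    and lim: "(\<lambda>R. \<Sum>N<h R. f N) \<longlonglongrightarrow> S"
  shows "f sums S"
proof -
  have "incseq (\<lambda>R. \<Sum>N<h R. f N)"
    using \<open>strict_mono h\<close> nonneg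
    by (intro incseq_SucI sum_mono2) (auto simp: strict_mono_less_eq)
  then have "(\<Sum>N<h n. f N) \<le> S" for n
    using lim by (rule incseq_le)
  moreover have "(\<Sum>N<n. f N) \<le> (\<Sum>N<h n. f N)" for n
    using seq_suble[OF \<open>strict_mono h\<close>] nonneg by (intro sum_mono2) auto
  ultimately have "summable f"
    by (intro summableI_nonneg_bounded[OF nonneg]) (rule order_trans)
  then have "(\<lambda>R. \<Sum>N<h R. f N) \<longlonglongrightarrow> suminf f"
    using LIMSEQ_subseq_LIMSEQ[OF summable_LIMSEQ \<open>strict_mono h\<close>] by (simp add: o_def)
  with lim \<open>summable f\<close> show ?thesis
    using LIMSEQ_unique sums_iff by blast
qed

lemma alternating_geometric_sum_remainder:
  fixes x q B :: real
  assumes "1 \<le> x" "0 \<le> q" "0 < B"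
  shows "(\<Sum>p<P. (-1) ^ p * (q ^ p / B) / x ^ (p+1)) = 1 / (B * (x + q)) - (- (q / x)) ^ P / (B * (x + q))"
proof -
  define y where "y = - (q / x)"
  have "y \<le> 0"
    using assms unfolding y_def by simp
  then have "y \<noteq> 1"
    by auto
  have denom: "(y - 1) * (B * x) = - (B * (x + q))"
    using assms unfolding y_def by (simp add: field_simps)
  have "(\<Sum>p<P. (-1) ^ p * (q ^ p / B) / x ^ (p+1)) = (\<Sum>p<P. y ^ p) / (B * x)"
    unfolding y_def sum_divide_distrib by (simp add: power_minus' power_divide field_simps)
  also have "\<dots> = (y ^ P - 1) / ((y - 1) * (B * x))"
    using geometric_sum[OF \<open>y \<noteq> 1\<close>] by simp
  also have "\<dots> = (1 - y ^ P) / (B * (x + q))"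
    unfolding denom by (simp add: minus_divide_left del: divide_minus_left)
  finally show ?thesis
    unfolding y_def by (simp add: diff_divide_distrib)
qed

text \<open>This is \<open>\<integral>\<^sub>x\<^sup>x\<^sup>+\<^sup>1 t\<^sup>m dt\<close> computed termwise from the binomial expansion of \<open>(x + s)\<^sup>m\<close>.\<close>
lemma sum_choose_div_eq_power_diff:
  fixes x :: real
  shows "(\<Sum>i\<le>m. real (m choose i) * x ^ i / real (m + 1 - i)) = ((x + 1) ^ (m+1) - x ^ (m+1)) / real (m+1)"
proof -
  have absorb: "real (m choose i) / real (m + 1 - i) = real (Suc m choose i) / real (m+1)" if "i \<le> m" for i
  proof -
    have "(Suc m - i) * (Suc m choose i) = Suc m * (m choose i)"
      using binomial_absorb_comp[of "Suc m" i] by simp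
    then have "real (Suc m - i) * real (Suc m choose i) = real (Suc m) * real (m choose i)"
      by (metis of_nat_mult)
    moreover have "real (Suc m - i) > 0" using that by simp
    ultimately show ?thesis using that by (simp add: field_simps)
  qed
  have "(x + 1) ^ (m+1) = (\<Sum>i\<le>Suc m. real (Suc m choose i) * x ^ i)"
    using binomial_ring[of x 1 "Suc m"] by simp
  also have "\<dots> = (\<Sum>i\<le>m. real (Suc m choose i) * x ^ i) + x ^ (m+1)"
    by simp
  finally have binomial: "(\<Sum>i\<le>m. real (Suc m choose i) * x ^ i) = (x + 1) ^ (m+1) - x ^ (m+1)"
    by simp
  have "(\<Sum>i\<le>m. real (m choose i) * x ^ i / real (m + 1 - i)) = (\<Sum>i\<le>m. real (Suc m choose i) * x ^ i / real (m+1))"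
  proof (rule sum.cong[OF refl])
    fix i assume "i \<in> {..m}"
    then have "real (m choose i) * x ^ i / real (m + 1 - i) = x ^ i * (real (m choose i) / real (m + 1 - i))"
      by simp
    also have "\<dots> = real (Suc m choose i) * x ^ i / real (m+1)"
      using absorb[of i] \<open>i \<in> {..m}\<close> by simp
    finally show "real (m choose i) * x ^ i / real (m + 1 - i) = real (Suc m choose i) * x ^ i / real (m+1)" .
  qed
  also have "\<dots> = ((x + 1) ^ (m+1) - x ^ (m+1)) / real (m+1)"
    unfolding binomial[symmetric] by (simp add: sum_divide_distrib)
  finally show ?thesis .
qed

lemma mult_power_Suc_add_mod: "(x * b ^ Suc r + t) mod b = t mod (b::nat)"
  by (simp add: mult.assoc mult.left_commute[of x b])

lemma mult_power_Suc_add_div: "0 < b \<Longrightarrow> (x * b ^ Suc r + t) div b = x * b ^ r + t div (b::nat)"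
  by (simp add: mult.assoc mult.left_commute[of x b])

text \<open>Occurrences of \<open>d\<close> among the last \<open>r\<close> base-\<open>b\<close> digits of \<open>t\<close>, leading zeros included.\<close>
fun digit_count_padded :: "nat \<Rightarrow> nat \<Rightarrow> nat \<Rightarrow> nat \<Rightarrow> nat" where
  "digit_count_padded b d 0 t = 0"
| "digit_count_padded b d (Suc r) t = (if t mod b = d then 1 else 0) + digit_count_padded b d r (t div b)"

declare u_coef.simps[simp del] digit_count.simps[simp del]

locale irwin_base =
  fixes b d :: nat
  assumes base_ge_2: "2 \<le> b" and digit_less_base: "d < b"
begin

lemma base_pos: "0 < b"
  using base_ge_2 by simp

lemma div_base_less_power: "t < b ^ Suc r \<Longrightarrow> t div b < b ^ r"
  using base_pos by (simp add: div_less_iff_less_mult mult.commute)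

lemma digit_count_padded_prepend:
  assumes "a < b" "t < b ^ r"
  shows "digit_count_padded b d (Suc r) (a * b ^ r + t) = (if a = d then 1 else 0) + digit_count_padded b d r t"
  using assms(2)
proof (induction r arbitrary: t)
  case 0
  then show ?case using assms(1) by simp
next
  case (Suc r)
  then show ?case
    using Suc.IH[OF div_base_less_power]
    by (simp only: digit_count_padded.simps mult_power_Suc_add_mod mult_power_Suc_add_div[OF base_pos])
qed

lemma digit_count_step:
  "0 < n \<Longrightarrow> digit_count b d n = (if n mod b = d then 1 else 0) + digit_count b d (n div b)"
  using base_ge_2 digit_count.simps[of b d n] by simp

lemma digit_count_append:
  assumes "0 < n" "t < b ^ r"
  shows "digit_count b d (n * b ^ r + t) = digit_count b d n + digit_count_padded b d r t"
  using assms(2)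
proof (induction r arbitrary: t)
  case 0
  then show ?case by simp
next
  case (Suc r)
  have pos: "0 < n * b ^ Suc r + t"
    using assms(1) base_pos by simp
  show ?case
    unfolding digit_count_step[OF pos] mult_power_Suc_add_mod
      mult_power_Suc_add_div[OF base_pos] Suc.IH[OF div_base_less_power[OF Suc.prems]]
    by simp
qed

lemma recursion_denominator_pos: "0 < real b ^ (m+1) - real b + 1"
proof -
  have "real b * 1 \<le> real b * real b ^ m"
    using base_ge_2 by (intro mult_left_mono) (auto simp: one_le_power)
  then show ?thesis by simp
qed

lemma sum_digits_split:
  "(\<Sum>a<b. if a = d then A else B a) = A + (\<Sum>a\<in>{a. a < b \<and> a \<noteq> d}. (B a :: real))"
proof -
  have "{a. a < b \<and> a \<noteq> d} = {..<b} - {d}" by auto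
  moreover have "(\<Sum>a<b. if a = d then A else B a) = A + (\<Sum>a\<in>{..<b} - {d}. if a = d then A else B a)"
    using digit_less_base by (subst sum.remove[of _ d]) auto
  ultimately show ?thesis by simp
qed

lemma sum_digit_powers: "(\<Sum>a<b. real a ^ i) = real d ^ i + gamma_pow b d i"
proof -
  have "(\<Sum>a<b. real a ^ i) = (\<Sum>a<b. if a = d then real d ^ i else real a ^ i)"
    by (rule sum.cong) auto
  then show ?thesis
    unfolding sum_digits_split gamma_pow_def .
qed

lemma gamma_pow_0: "gamma_pow b d 0 = real b - 1"
  using sum_digit_powers[of 0] by simp

lemma gamma_pow_nonneg: "0 \<le> gamma_pow b d i"
  unfolding gamma_pow_def by (rule sum_nonneg) simp

section \<open>The recursion for \<open>u\<close>\<close>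

definition gamma_convolution :: "(nat \<Rightarrow> real) \<Rightarrow> nat \<Rightarrow> real" where
  "gamma_convolution X m = (\<Sum>i=1..m. real (m choose i) * gamma_pow b d i * X (m - i))"

definition digit_convolution :: "(nat \<Rightarrow> real) \<Rightarrow> nat \<Rightarrow> real" where
  "digit_convolution X m = (\<Sum>i=0..m. real (m choose i) * real d ^ i * X (m - i))"

lemma gamma_convolution_cong: "(\<And>k. k < m \<Longrightarrow> X k = Y k) \<Longrightarrow> gamma_convolution X m = gamma_convolution Y m"
  unfolding gamma_convolution_def by (intro sum.cong) auto

lemma digit_convolution_cong: "(\<And>k. k \<le> m \<Longrightarrow> X k = Y k) \<Longrightarrow> digit_convolution X m = digit_convolution Y m"
  unfolding digit_convolution_def by (intro sum.cong) auto

lemma gamma_convolution_diff: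
  "gamma_convolution (\<lambda>k. X k - Y k) m = gamma_convolution X m - gamma_convolution Y m"
  unfolding gamma_convolution_def by (simp add: sum_subtractf[symmetric] right_diff_distrib)

lemma digit_convolution_diff:
  "digit_convolution (\<lambda>k. X k - Y k) m = digit_convolution X m - digit_convolution Y m"
  unfolding digit_convolution_def by (simp add: sum_subtractf[symmetric] right_diff_distrib)

lemma gamma_convolution_nonneg: "(\<And>k. k < m \<Longrightarrow> 0 \<le> X k) \<Longrightarrow> 0 \<le> gamma_convolution X m"
  unfolding gamma_convolution_def by (intro sum_nonneg mult_nonneg_nonneg gamma_pow_nonneg) auto

lemma digit_convolution_nonneg: "(\<And>k. k \<le> m \<Longrightarrow> 0 \<le> X k) \<Longrightarrow> 0 \<le> digit_convolution X m"
  unfolding digit_convolution_def by (intro sum_nonneg mult_nonneg_nonneg) auto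

lemma u_coef_recursion:
  "(real b ^ (m+1) - real b + 1) * u_coef b d j m =
     (if j = 0 \<and> m = 0 then real b else 0) + gamma_convolution (u_coef b d j) m
     + (if j = 0 then 0 else digit_convolution (u_coef b d (j - 1)) m)"
  using u_coef.simps[of b d j m] recursion_denominator_pos[of m]
  unfolding gamma_convolution_def digit_convolution_def by auto

lemma u_coef_0: "u_coef b d j 0 = real b"
proof (induction j)
  case 0
  then show ?case using u_coef_recursion[of 0 0] by (simp add: gamma_convolution_def)
next
  case (Suc j)
  then show ?case
    using u_coef_recursion[of 0 "Suc j"] by (simp add: gamma_convolution_def digit_convolution_def)
qed

lemma u_coef_nonneg: "0 \<le> u_coef b d j m"
proof (induction j arbitrary: m rule: less_induct)
  case (less j)
  note IH_level = less.IH
  show ?case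
  proof (induction m rule: less_induct)
    case (less m)
    have "0 \<le> (real b ^ (m+1) - real b + 1) * u_coef b d j m"
      unfolding u_coef_recursion using less.IH IH_level
      by (auto intro!: add_nonneg_nonneg gamma_convolution_nonneg digit_convolution_nonneg)
    then show ?case
      using recursion_denominator_pos[of m] by (simp add: zero_le_mult_iff)
  qed
qed

section \<open>Moments of digit blocks\<close>

text \<open>\<open>X j k\<close> seen from behind a leading digit \<open>a\<close>: if \<open>a = d\<close>, that digit already uses up one of the
  \<open>j\<close> prescribed occurrences of \<open>d\<close>.\<close>
definition suffix_moment :: "(nat \<Rightarrow> nat \<Rightarrow> real) \<Rightarrow> nat \<Rightarrow> nat \<Rightarrow> nat \<Rightarrow> real" where
  "suffix_moment X j a k = (if a = d then (if j = 0 then 0 else X (j - 1) k) else X j k)"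

text \<open>Splitting off the leading digit \<open>a\<close> of a block of \<open>r + 1\<close> digits writes the block as
  \<open>(a + s) / b\<close> with \<open>s\<close> the value of the remaining block scaled into \<open>[0, 1)\<close>; expanding the
  \<open>m\<close>-th power binomially gives this equation for moments summed over all block lengths.\<close>
definition moment_equation :: "(nat \<Rightarrow> nat \<Rightarrow> real) \<Rightarrow> bool" where
  "moment_equation X \<longleftrightarrow> (\<forall>j m. real b ^ (m+1) * X j m =
     (if j = 0 \<and> m = 0 then real b else 0) +
     (\<Sum>a<b. \<Sum>i\<le>m. real (m choose i) * real a ^ i * suffix_moment X j a (m - i)))"

lemma sum_digits_suffix_moment:
  "(\<Sum>a<b. real a ^ i * suffix_moment X j a k) =
     gamma_pow b d i * X j k + (if j = 0 then 0 else real d ^ i * X (j - 1) k)"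
proof -
  have "(\<Sum>a<b. real a ^ i * suffix_moment X j a k) =
      (\<Sum>a<b. if a = d then (if j = 0 then 0 else real d ^ i * X (j - 1) k) else real a ^ i * X j k)"
    unfolding suffix_moment_def by (rule sum.cong) auto
  then show ?thesis
    unfolding sum_digits_split gamma_pow_def by (simp add: sum_distrib_right)
qed

lemma moment_equation_rhs:
  "(\<Sum>a<b. \<Sum>i\<le>m. real (m choose i) * real a ^ i * suffix_moment X j a (m - i)) =
     (real b - 1) * X j m + gamma_convolution (X j) m
     + (if j = 0 then 0 else digit_convolution (X (j - 1)) m)"
proof -
  have "(\<Sum>a<b. \<Sum>i\<le>m. real (m choose i) * real a ^ i * suffix_moment X j a (m - i)) =
      (\<Sum>i\<le>m. real (m choose i) * (\<Sum>a<b. real a ^ i * suffix_moment X j a (m - i)))"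
    by (subst sum.swap) (simp add: sum_distrib_left mult.assoc)
  also have "\<dots> = (\<Sum>i\<le>m. real (m choose i) * gamma_pow b d i * X j (m - i)) +
      (if j = 0 then 0 else (\<Sum>i\<le>m. real (m choose i) * real d ^ i * X (j - 1) (m - i)))"
    unfolding sum_digits_suffix_moment by (simp add: sum.distrib algebra_simps)
  also have "(\<Sum>i\<le>m. real (m choose i) * gamma_pow b d i * X j (m - i)) =
      (real b - 1) * X j m + gamma_convolution (X j) m"
    unfolding gamma_convolution_def atMost_atLeast0 sum.atLeast_Suc_atMost[OF le0]
    by (simp add: gamma_pow_0)
  finally show ?thesis
    by (simp add: digit_convolution_def atMost_atLeast0)
qed

lemma moment_equation_iff_recursion:
  "moment_equation X \<longleftrightarrow> (\<forall>j m. (real b ^ (m+1) - real b + 1) * X j m =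
     (if j = 0 \<and> m = 0 then real b else 0) + gamma_convolution (X j) m
     + (if j = 0 then 0 else digit_convolution (X (j - 1)) m))"
  unfolding moment_equation_def moment_equation_rhs by (simp add: algebra_simps)

lemma u_coef_moment_equation: "moment_equation (u_coef b d)"
  unfolding moment_equation_iff_recursion using u_coef_recursion by blast

lemma moment_equation_imp_eq_u_coef:
  assumes "moment_equation X"
  shows "X j m = u_coef b d j m"
proof (induction j arbitrary: m rule: less_induct)
  case (less j)
  note IH_level = less.IH
  show ?case
  proof (induction m rule: less_induct)
    case (less m)
    have "gamma_convolution (X j) m = gamma_convolution (u_coef b d j) m"
      using less.IH by (rule gamma_convolution_cong)
    moreover have "digit_convolution (X (j - 1)) m = digit_convolution (u_coef b d (j - 1)) m"
      if "j \<noteq> 0"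
      using IH_level that by (intro digit_convolution_cong) simp
    ultimately have "(real b ^ (m+1) - real b + 1) * X j m = (real b ^ (m+1) - real b + 1) * u_coef b d j m"
      using assms u_coef_recursion[of m j] unfolding moment_equation_iff_recursion by simp
    then show ?case
      using recursion_denominator_pos[of m] by simp
  qed
qed

definition block_term :: "nat \<Rightarrow> nat \<Rightarrow> nat \<Rightarrow> nat \<Rightarrow> real" where
  "block_term j m r t = (if digit_count_padded b d r t = j then (real t / real b ^ r) ^ m / real b ^ r else 0)"

definition block_moment :: "nat \<Rightarrow> nat \<Rightarrow> nat \<Rightarrow> real" where
  "block_moment j m r = (\<Sum>t<b^r. block_term j m r t)"

lemma block_term_nonneg: "0 \<le> block_term j m r t"
  unfolding block_term_def by simp

lemma block_moment_nonneg: "0 \<le> block_moment j m r"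
  unfolding block_moment_def by (intro sum_nonneg block_term_nonneg)

lemma block_moment_empty: "block_moment j m 0 = (if j = 0 \<and> m = 0 then 1 else 0)"
proof -
  have "block_moment j m 0 = (\<Sum>t\<in>{0::nat}. if j = 0 then real t ^ m else 0)"
    unfolding block_moment_def block_term_def by (intro sum.cong) auto
  then show ?thesis by simp
qed

lemma suffix_moment_block_moment:
  "suffix_moment (\<lambda>j m. block_moment j m r) j a k =
     (\<Sum>t<b^r. if (if a = d then 1 else 0) + digit_count_padded b d r t = j
               then (real t / real b ^ r) ^ k / real b ^ r else 0)"
  unfolding suffix_moment_def block_moment_def block_term_def by (auto intro!: sum.cong)

lemma suffix_moment_sum: "suffix_moment (\<lambda>j m. \<Sum>r\<in>R. X r j m) j a k = (\<Sum>r\<in>R. suffix_moment (X r) j a k)"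
  by (simp add: suffix_moment_def)

lemma suffix_moment_mono: "(\<And>j m. X j m \<le> Y j m) \<Longrightarrow> suffix_moment X j a k \<le> suffix_moment Y j a k"
  by (simp add: suffix_moment_def)

lemma binomial_prepend_digit:
  fixes a t r :: nat and c :: bool
  defines "s \<equiv> real t / real b ^ r"
  shows "(if c then (real (a * b ^ r + t) / real b ^ Suc r) ^ m / real b ^ Suc r else 0) =
     (\<Sum>i\<le>m. real (m choose i) * real a ^ i * (if c then s ^ (m - i) / real b ^ r else 0)) / real b ^ (m+1)"
proof (cases c)
  case True
  have "real b ^ r \<noteq> 0"
    using base_pos by simp
  then have leading: "real (a * b ^ r + t) / real b ^ Suc r = (real a + s) / real b"
    unfolding s_def using base_pos by (simp add: field_simps)
  have "(\<Sum>i\<le>m. real (m choose i) * real a ^ i * (s ^ (m - i) / real b ^ r)) = (real a + s) ^ m / real b ^ r"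
    by (simp add: binomial_ring sum_divide_distrib mult.assoc)
  then show ?thesis
    using True \<open>real b ^ r \<noteq> 0\<close> base_pos unfolding leading by (simp add: power_divide field_simps)
qed simp

lemma block_moment_Suc:
  "block_moment j m (Suc r) =
     (\<Sum>a<b. \<Sum>i\<le>m. real (m choose i) * real a ^ i * suffix_moment (\<lambda>j m. block_moment j m r) j a (m - i))
     / real b ^ (m+1)"
proof -
  define w where "w a t = (if (if a = d then 1 else 0) + digit_count_padded b d r t = j
      then (real (a * b^r + t) / real b ^ Suc r) ^ m / real b ^ Suc r else 0)" for a t
  have "block_moment j m (Suc r) = (\<Sum>a<b. \<Sum>t<b^r. if digit_count_padded b d (Suc r) (a * b^r + t) = j
      then (real (a * b^r + t) / real b ^ Suc r) ^ m / real b ^ Suc r else 0)"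
    unfolding block_moment_def block_term_def
    using sum_atLeastLessThan_mult_blocks[of 0 b _ "b ^ r"]
    by (simp add: atLeast0LessThan del: digit_count_padded.simps)
  also have "\<dots> = (\<Sum>a<b. \<Sum>t<b^r. w a t)"
    unfolding w_def by (intro sum.cong refl) (simp add: digit_count_padded_prepend del: digit_count_padded.simps)
  also have "\<dots> = (\<Sum>a<b. \<Sum>t<b^r. (\<Sum>i\<le>m. real (m choose i) * real a ^ i *
      (if (if a = d then 1 else 0) + digit_count_padded b d r t = j
       then (real t / real b ^ r) ^ (m - i) / real b ^ r else 0)) / real b ^ (m+1))"
    unfolding w_def by (intro sum.cong refl binomial_prepend_digit)
  also have "\<dots> = (\<Sum>a<b. \<Sum>i\<le>m. real (m choose i) * real a ^ i * (\<Sum>t<b^r.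
      (if (if a = d then 1 else 0) + digit_count_padded b d r t = j
       then (real t / real b ^ r) ^ (m - i) / real b ^ r else 0))) / real b ^ (m+1)"
    by (simp add: sum_divide_distrib sum_distrib_left sum.swap[of _ "{..m}"])
  also have "\<dots> = (\<Sum>a<b. \<Sum>i\<le>m. real (m choose i) * real a ^ i *
      suffix_moment (\<lambda>j m. block_moment j m r) j a (m - i)) / real b ^ (m+1)"
    unfolding suffix_moment_block_moment ..
  finally show ?thesis .
qed

lemma block_moment_partial_sums_step:
  "real b ^ (m+1) * (\<Sum>r<Suc R. block_moment j m r) = (if j = 0 \<and> m = 0 then real b else 0) +
     (\<Sum>a<b. \<Sum>i\<le>m. real (m choose i) * real a ^ i
        * suffix_moment (\<lambda>j m. \<Sum>r<R. block_moment j m r) j a (m - i))"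
proof -
  have "(\<Sum>r<Suc R. block_moment j m r) = block_moment j m 0 + (\<Sum>r<R. block_moment j m (Suc r))"
    by (rule sum.lessThan_Suc_shift)
  also have "(\<Sum>r<R. block_moment j m (Suc r)) = (\<Sum>r<R. \<Sum>a<b. \<Sum>i\<le>m. real (m choose i) * real a ^ i
      * suffix_moment (\<lambda>j m. block_moment j m r) j a (m - i)) / real b ^ (m+1)"
    unfolding block_moment_Suc by (simp add: sum_divide_distrib)
  also have "(\<Sum>r<R. \<Sum>a<b. \<Sum>i\<le>m. real (m choose i) * real a ^ i
      * suffix_moment (\<lambda>j m. block_moment j m r) j a (m - i)) =
    (\<Sum>a<b. \<Sum>i\<le>m. real (m choose i) * real a ^ i
      * suffix_moment (\<lambda>j m. \<Sum>r<R. block_moment j m r) j a (m - i))"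
    unfolding suffix_moment_sum sum_distrib_left
    by (subst sum.swap, rule sum.cong[OF refl], subst sum.swap, simp)
  finally show ?thesis
    using base_pos unfolding block_moment_empty by (simp add: field_simps)
qed

lemma block_moment_partial_sums_le_u_coef: "(\<Sum>r<R. block_moment j m r) \<le> u_coef b d j m"
proof (induction R arbitrary: j m)
  case 0
  show ?case by (simp add: u_coef_nonneg)
next
  case (Suc R)
  have "real b ^ (m+1) * (\<Sum>r<Suc R. block_moment j m r) \<le> real b ^ (m+1) * u_coef b d j m"
    using u_coef_moment_equation unfolding block_moment_partial_sums_step moment_equation_def
    by (simp only:) (intro add_left_mono sum_mono mult_left_mono suffix_moment_mono Suc.IH; simp)
  then show ?case
    using base_pos by (simp add: mult_le_cancel_left_pos)
qed

lemma summable_block_moment: "summable (block_moment j m)"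
  by (rule summableI_nonneg_bounded[where x="u_coef b d j m"])
     (auto simp: block_moment_nonneg block_moment_partial_sums_le_u_coef)

lemma block_moment_sums_u_coef: "block_moment j m sums u_coef b d j m"
proof -
  have partial_sums: "(\<lambda>R. \<Sum>r<R. block_moment j m r) \<longlonglongrightarrow> suminf (block_moment j m)" for j m
    by (rule summable_LIMSEQ[OF summable_block_moment])
  have "moment_equation (\<lambda>j m. suminf (block_moment j m))"
    unfolding moment_equation_def
  proof (intro allI)
    fix j m
    have suffix: "(\<lambda>R. suffix_moment (\<lambda>j m. \<Sum>r<R. block_moment j m r) j a k)
        \<longlonglongrightarrow> suffix_moment (\<lambda>j m. suminf (block_moment j m)) j a k" for a k
      unfolding suffix_moment_def by (auto intro: partial_sums)
    have "(\<lambda>R. real b ^ (m+1) * (\<Sum>r<Suc R. block_moment j m r))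
        \<longlonglongrightarrow> real b ^ (m+1) * suminf (block_moment j m)"
      by (intro tendsto_mult_left LIMSEQ_Suc partial_sums)
    moreover have "(\<lambda>R. real b ^ (m+1) * (\<Sum>r<Suc R. block_moment j m r)) \<longlonglongrightarrow>
        (if j = 0 \<and> m = 0 then real b else 0) + (\<Sum>a<b. \<Sum>i\<le>m. real (m choose i) * real a ^ i
          * suffix_moment (\<lambda>j m. suminf (block_moment j m)) j a (m - i))"
      unfolding block_moment_partial_sums_step by (intro tendsto_intros suffix)
    ultimately show "real b ^ (m+1) * suminf (block_moment j m) =
        (if j = 0 \<and> m = 0 then real b else 0) + (\<Sum>a<b. \<Sum>i\<le>m. real (m choose i) * real a ^ i
          * suffix_moment (\<lambda>j m. suminf (block_moment j m)) j a (m - i))"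
      by (rule LIMSEQ_unique)
  qed
  then have "suminf (block_moment j m) = u_coef b d j m"
    by (rule moment_equation_imp_eq_u_coef)
  then show ?thesis
    using summable_block_moment summable_sums by metis
qed

section \<open>Positivity and monotonicity in \<open>m\<close>\<close>

lemma scaled_block_less_1: "t < b ^ r \<Longrightarrow> real t / real b ^ r < 1"
  using base_pos by (simp add: divide_less_eq)

lemma block_term_Suc_le:
  assumes "t < b ^ r"
  shows "block_term j (Suc m) r t \<le> block_term j m r t"
proof (cases "digit_count_padded b d r t = j")
  case True
  have "(real t / real b ^ r) ^ Suc m \<le> (real t / real b ^ r) ^ m"
    using scaled_block_less_1[OF assms] by (intro power_decreasing) auto
  then show ?thesis
    unfolding block_term_def if_P[OF True] by (rule divide_right_mono) simp
qed (simp add: block_term_def)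

lemma block_moment_Suc_le: "block_moment j (Suc m) r \<le> block_moment j m r"
  unfolding block_moment_def by (intro sum_mono block_term_Suc_le) simp

lemma block_term_Suc_less:
  assumes "t < b ^ r" "0 < block_term j m r t"
  shows "block_term j (Suc m) r t < block_term j m r t"
proof -
  define q where "q = real t / real b ^ r"
  have j: "digit_count_padded b d r t = j"
    using assms(2) unfolding block_term_def by (auto split: if_splits)
  have "0 < q ^ m"
    using assms(2) base_pos unfolding block_term_def if_P[OF j] q_def[symmetric]
    by (simp add: zero_less_divide_iff)
  then have "q * q ^ m < 1 * q ^ m"
    using scaled_block_less_1[OF assms(1)] unfolding q_def by (intro mult_strict_right_mono)
  then show ?thesis
    unfolding block_term_def if_P[OF j] q_def[symmetric] power_Suc
    using base_pos by (intro divide_strict_right_mono) simp_all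
qed

lemma block_moment_Suc_less:
  assumes "0 < block_moment j m r"
  shows "block_moment j (Suc m) r < block_moment j m r"
proof -
  obtain t where t: "t < b^r" "block_term j m r t \<noteq> 0"
    using assms sum.not_neutral_contains_not_neutral[of "block_term j m r" "{..<b^r}"]
    unfolding block_moment_def by force
  then have "0 < block_term j m r t"
    using block_term_nonneg by (simp add: less_le)
  then show ?thesis
    unfolding block_moment_def using t(1)
    by (intro sum_strict_mono_ex1) (auto intro: block_term_Suc_le block_term_Suc_less)
qed

lemma u_coef_Suc_le: "u_coef b d j (Suc m) \<le> u_coef b d j m"
  using block_moment_Suc_le block_moment_sums_u_coef block_moment_sums_u_coef by (rule sums_le)

lemma u_coef_Suc_less:
  assumes "0 < u_coef b d j m"
  shows "u_coef b d j (Suc m) < u_coef b d j m"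
proof -
  have "0 < suminf (block_moment j m)"
    using assms sums_unique[OF block_moment_sums_u_coef] by simp
  then obtain r where "0 < block_moment j m r"
    using suminf_pos_iff[OF summable_block_moment block_moment_nonneg] by blast
  then have "0 < (\<Sum>r. block_moment j m r - block_moment j (Suc m) r)"
    using block_moment_Suc_le block_moment_Suc_less
    by (intro suminf_pos2[of _ r] summable_diff summable_block_moment) auto
  then show ?thesis
    using sums_unique[OF sums_diff[OF block_moment_sums_u_coef block_moment_sums_u_coef, of j m j "Suc m"]]
    by simp
qed

lemma u_coef_le_base: "u_coef b d j m \<le> real b"
proof (induction m)
  case (Suc m)
  then show ?case using u_coef_Suc_le[of j m] by linarith
qed (simp add: u_coef_0)

lemma gamma_pow_pos:
  assumes "\<not> (b = 2 \<and> d = 1)"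
  shows "0 < gamma_pow b d i"
proof -
  obtain a where "a < b" "a \<noteq> d" "0 < a"
  proof (cases "d = 1")
    case True
    then show ?thesis using that[of 2] assms base_ge_2 by auto
  next
    case False
    then show ?thesis using that[of 1] base_ge_2 by auto
  qed
  then show ?thesis
    unfolding gamma_pow_def by (intro sum_pos2[of _ a]) auto
qed

lemma gamma_convolution_ge_last:
  assumes "1 \<le> m" "\<And>k. k < m \<Longrightarrow> 0 \<le> X k"
  shows "gamma_pow b d m * X 0 \<le> gamma_convolution X m"
proof -
  have "real (m choose m) * gamma_pow b d m * X (m - m) \<le> gamma_convolution X m"
    unfolding gamma_convolution_def using assms
    by (intro member_le_sum mult_nonneg_nonneg gamma_pow_nonneg) auto
  then show ?thesis by simp
qed

lemma digit_convolution_ge_first: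
  assumes "\<And>k. k \<le> m \<Longrightarrow> 0 \<le> X k"
  shows "X m \<le> digit_convolution X m"
proof -
  have "real (m choose 0) * real d ^ 0 * X (m - 0) \<le> digit_convolution X m"
    unfolding digit_convolution_def using assms by (intro member_le_sum mult_nonneg_nonneg) auto
  then show ?thesis by simp
qed

lemma digit_convolution_ge_last:
  assumes "\<And>k. k \<le> m \<Longrightarrow> 0 \<le> X k"
  shows "real d ^ m * X 0 \<le> digit_convolution X m"
proof -
  have "real (m choose m) * real d ^ m * X (m - m) \<le> digit_convolution X m"
    unfolding digit_convolution_def using assms by (intro member_le_sum mult_nonneg_nonneg) auto
  then show ?thesis by simp
qed

lemma u_coef_pos:
  assumes "1 \<le> m" "\<not> (j = 0 \<and> b = 2 \<and> d = 1)"
  shows "0 < u_coef b d j m"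
proof -
  have "0 < gamma_convolution (u_coef b d j) m + (if j = 0 then 0 else digit_convolution (u_coef b d (j - 1)) m)"
  proof (cases "b = 2 \<and> d = 1")
    case True
    then have "0 < real d ^ m * u_coef b d (j - 1) 0"
      unfolding u_coef_0 by simp
    also have "\<dots> \<le> digit_convolution (u_coef b d (j - 1)) m"
      by (rule digit_convolution_ge_last) (rule u_coef_nonneg)
    finally have "0 < digit_convolution (u_coef b d (j - 1)) m" .
    moreover have "j \<noteq> 0"
      using True assms(2) by simp
    moreover have "0 \<le> gamma_convolution (u_coef b d j) m"
      by (rule gamma_convolution_nonneg) (rule u_coef_nonneg)
    ultimately show ?thesis by simp
  next
    case False
    have "0 < gamma_pow b d m * u_coef b d j 0"
      using gamma_pow_pos[OF False] base_pos by (simp add: u_coef_0)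
    also have "\<dots> \<le> gamma_convolution (u_coef b d j) m"
      using assms(1) by (rule gamma_convolution_ge_last) (rule u_coef_nonneg)
    finally have "0 < gamma_convolution (u_coef b d j) m" .
    moreover have "0 \<le> digit_convolution (u_coef b d (j - 1)) m"
      by (rule digit_convolution_nonneg) (rule u_coef_nonneg)
    ultimately show ?thesis by (simp add: add_pos_nonneg)
  qed
  then have "0 < (real b ^ (m+1) - real b + 1) * u_coef b d j m"
    using u_coef_recursion[of m j] assms(1) by simp
  then show ?thesis
    using recursion_denominator_pos[of m] by (simp add: zero_less_mult_iff)
qed

section \<open>Monotonicity and limit in \<open>j\<close>\<close>

lemma u_coef_Suc_level_diff_recursion:
  assumes "1 \<le> m"
  shows "(real b ^ (m+1) - real b + 1) * (u_coef b d (Suc j) m - u_coef b d j m) =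
     gamma_convolution (\<lambda>k. u_coef b d (Suc j) k - u_coef b d j k) m
     + digit_convolution (\<lambda>k. u_coef b d j k - (if j = 0 then 0 else u_coef b d (j - 1) k)) m"
  using u_coef_recursion[of m "Suc j"] u_coef_recursion[of m j] assms
  by (cases j) (simp_all add: gamma_convolution_diff digit_convolution_diff algebra_simps)

text \<open>The difference of consecutive levels satisfies the recursion of a single level, with the
  previous difference as source term; a positive source makes the difference positive.\<close>
lemma u_coef_less_Suc_level_if_source_pos:
  assumes "\<And>m. 1 \<le> m \<Longrightarrow>
    0 < digit_convolution (\<lambda>k. u_coef b d j k - (if j = 0 then 0 else u_coef b d (j - 1) k)) m"
  shows "1 \<le> m \<Longrightarrow> u_coef b d j m < u_coef b d (Suc j) m"
proof (induction m rule: less_induct)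
  case (less m)
  have "0 \<le> gamma_convolution (\<lambda>k. u_coef b d (Suc j) k - u_coef b d j k) m"
  proof (rule gamma_convolution_nonneg)
    fix k assume "k < m"
    then show "0 \<le> u_coef b d (Suc j) k - u_coef b d j k"
      using less.IH[of k] by (cases "k = 0") (auto simp: u_coef_0)
  qed
  then have "0 < (real b ^ (m+1) - real b + 1) * (u_coef b d (Suc j) m - u_coef b d j m)"
    using assms[OF less.prems] u_coef_Suc_level_diff_recursion[OF less.prems, of j] by linarith
  then show ?case
    using recursion_denominator_pos[of m] by (simp add: zero_less_mult_iff)
qed

lemma u_coef_less_Suc_level: "1 \<le> m \<Longrightarrow> u_coef b d j m < u_coef b d (Suc j) m"
proof (induction j arbitrary: m)
  case 0
  show ?case
  proof (rule u_coef_less_Suc_level_if_source_pos[OF _ 0])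
    fix m :: nat assume "1 \<le> m"
    have "0 < digit_convolution (u_coef b d 0) m"
    proof (cases "d = 0")
      case True
      then have "0 < u_coef b d 0 m"
        using u_coef_pos[OF \<open>1 \<le> m\<close>] by simp
      also have "\<dots> \<le> digit_convolution (u_coef b d 0) m"
        by (rule digit_convolution_ge_first) (rule u_coef_nonneg)
      finally show ?thesis .
    next
      case False
      then have "0 < real d ^ m * u_coef b d 0 0"
        using base_pos by (simp add: u_coef_0)
      also have "\<dots> \<le> digit_convolution (u_coef b d 0) m"
        by (rule digit_convolution_ge_last) (rule u_coef_nonneg)
      finally show ?thesis .
    qed
    then show "0 < digit_convolution (\<lambda>k. u_coef b d 0 k - (if 0 = (0::nat) then 0 else u_coef b d (0 - 1) k)) m"
      by simp
  qed
next
  case (Suc j)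
  show ?case
  proof (rule u_coef_less_Suc_level_if_source_pos[OF _ Suc.prems])
    fix m :: nat assume "1 \<le> m"
    have "0 < u_coef b d (Suc j) m - u_coef b d j m"
      using Suc.IH[OF \<open>1 \<le> m\<close>] by simp
    also have "\<dots> \<le> digit_convolution (\<lambda>k. u_coef b d (Suc j) k - u_coef b d j k) m"
    proof (rule digit_convolution_ge_first)
      fix k
      show "0 \<le> u_coef b d (Suc j) k - u_coef b d j k"
        using Suc.IH[of k] by (cases "k = 0") (auto simp: u_coef_0)
    qed
    finally show "0 < digit_convolution
        (\<lambda>k. u_coef b d (Suc j) k - (if Suc j = 0 then 0 else u_coef b d (Suc j - 1) k)) m"
      by simp
  qed
qed

lemma incseq_u_coef_level: "incseq (\<lambda>j. u_coef b d j m)"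
proof (rule incseq_SucI)
  fix j
  show "u_coef b d j m \<le> u_coef b d (Suc j) m"
    using u_coef_less_Suc_level[of m j] by (cases "m = 0") (auto simp: u_coef_0)
qed

definition u_limit :: "nat \<Rightarrow> real" where
  "u_limit m = lim (\<lambda>j. u_coef b d j m)"

lemma u_coef_tendsto_limit: "(\<lambda>j. u_coef b d j m) \<longlonglongrightarrow> u_limit m"
proof -
  have "\<forall>j. u_coef b d j m \<le> real b"
    using u_coef_le_base by simp
  then obtain l where "(\<lambda>j. u_coef b d j m) \<longlonglongrightarrow> l"
    using incseq_convergent[OF incseq_u_coef_level] by blast
  then show ?thesis
    unfolding u_limit_def by (rule convergentI[THEN convergent_LIMSEQ_iff[THEN iffD1]])
qed

lemma u_limit_recursion:
  assumes "1 \<le> m"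
  shows "(real b ^ (m+1) - real b + 1) * u_limit m = gamma_convolution u_limit m + digit_convolution u_limit m"
proof -
  have level_recursion: "(real b ^ (m+1) - real b + 1) * u_coef b d (Suc j) m =
      gamma_convolution (u_coef b d (Suc j)) m + digit_convolution (u_coef b d j) m" for j
    using u_coef_recursion[of m "Suc j"] assms by simp
  have "(\<lambda>j. (real b ^ (m+1) - real b + 1) * u_coef b d (Suc j) m)
      \<longlonglongrightarrow> (real b ^ (m+1) - real b + 1) * u_limit m"
    by (intro tendsto_mult_left LIMSEQ_Suc u_coef_tendsto_limit)
  moreover have "(\<lambda>j. gamma_convolution (u_coef b d (Suc j)) m + digit_convolution (u_coef b d j) m)
      \<longlonglongrightarrow> gamma_convolution u_limit m + digit_convolution u_limit m"
    unfolding gamma_convolution_def digit_convolution_def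
    by (intro tendsto_intros LIMSEQ_Suc u_coef_tendsto_limit)
  ultimately show ?thesis
    unfolding level_recursion by (rule LIMSEQ_unique)
qed

lemma sum_digit_powers_convolution:
  "(\<Sum>i\<le>m. real (m choose i) * (\<Sum>a<b. real a ^ i) * X (m - i)) =
     (real b - 1) * X m + gamma_convolution X m + digit_convolution X m"
proof -
  have "(\<Sum>i\<le>m. real (m choose i) * (\<Sum>a<b. real a ^ i) * X (m - i)) =
      (\<Sum>i\<le>m. real (m choose i) * gamma_pow b d i * X (m - i)) + digit_convolution X m"
    unfolding sum_digit_powers digit_convolution_def atMost_atLeast0
    by (simp add: sum.distrib algebra_simps)
  also have "(\<Sum>i\<le>m. real (m choose i) * gamma_pow b d i * X (m - i)) =
      (real b - 1) * X m + gamma_convolution X m"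
    unfolding gamma_convolution_def atMost_atLeast0 sum.atLeast_Suc_atMost[OF le0]
    by (simp add: gamma_pow_0)
  finally show ?thesis .
qed

text \<open>\<open>b / (m + 1)\<close> is the \<open>m\<close>-th moment of \<open>b\<close> times the uniform distribution on \<open>[0, 1]\<close>, which is
  invariant under the digit splitting; the computation is the telescoping sum
  \<open>\<Sum>a<b. (a + 1)\<^sup>m\<^sup>+\<^sup>1 - a\<^sup>m\<^sup>+\<^sup>1 = b\<^sup>m\<^sup>+\<^sup>1\<close>.\<close>
lemma b_div_Suc_recursion:
  defines "c \<equiv> \<lambda>k. real b / real (k+1)"
  shows "(real b ^ (m+1) - real b + 1) * c m = gamma_convolution c m + digit_convolution c m"
proof -
  have "gamma_convolution c m + digit_convolution c m
      = (\<Sum>i\<le>m. real (m choose i) * (\<Sum>a<b. real a ^ i) * c (m - i)) - (real b - 1) * c m"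
    using sum_digit_powers_convolution[of m c] by simp
  also have "(\<Sum>i\<le>m. real (m choose i) * (\<Sum>a<b. real a ^ i) * c (m - i)) =
      real b * (\<Sum>a<b. \<Sum>i\<le>m. real (m choose i) * real a ^ i / real (m + 1 - i))"
    unfolding c_def by (simp add: sum_distrib_left sum_distrib_right sum.swap[of _ "{..m}"] Suc_diff_le mult_ac)
  also have "\<dots> = real b * (\<Sum>a<b. ((real a + 1) ^ (m+1) - real a ^ (m+1)) / real (m+1))"
    unfolding sum_choose_div_eq_power_diff ..
  also have "\<dots> = real b ^ (m+1) * c m"
    using sum_lessThan_telescope[of "\<lambda>a. real a ^ (m+1)" b] unfolding c_def
    by (simp add: sum_divide_distrib[symmetric] add.commute)
  finally show ?thesis
    by (simp add: algebra_simps)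
qed

lemma digit_convolution_eq_first: "(\<And>k. k < m \<Longrightarrow> X k = 0) \<Longrightarrow> digit_convolution X m = X m"
  unfolding digit_convolution_def sum.atLeast_Suc_atMost[OF le0] by (simp add: sum.neutral)

lemma gamma_convolution_eq_0: "(\<And>k. k < m \<Longrightarrow> X k = 0) \<Longrightarrow> gamma_convolution X m = 0"
  unfolding gamma_convolution_def by (simp add: sum.neutral)

lemma u_limit_eq: "u_limit m = real b / real (m + 1)"
proof (induction m rule: less_induct)
  case (less m)
  show ?case
  proof (cases "m = 0")
    case True
    then show ?thesis
      using u_coef_tendsto_limit[of 0] LIMSEQ_unique[of "\<lambda>j. real b"] by (simp add: u_coef_0)
  next
    case False
    then have m: "1 \<le> m"
      by simp
    define Z where "Z k = u_limit k - real b / real (k + 1)" for k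
    have "(real b ^ (m+1) - real b + 1) * Z m =
        (real b ^ (m+1) - real b + 1) * u_limit m - (real b ^ (m+1) - real b + 1) * (real b / real (m+1))"
      unfolding Z_def by (simp add: right_diff_distrib)
    also have "\<dots> = gamma_convolution Z m + digit_convolution Z m"
      unfolding u_limit_recursion[OF m] b_div_Suc_recursion Z_def gamma_convolution_diff digit_convolution_diff
      by simp
    also have "\<dots> = Z m"
      using less.IH unfolding Z_def by (simp add: gamma_convolution_eq_0 digit_convolution_eq_first)
    finally have "(real b ^ (m+1) - real b) * Z m = 0"
      by (simp add: algebra_simps)
    moreover have "real b * 1 < real b * real b ^ m"
      using False base_ge_2 by (intro mult_strict_left_mono one_less_power) auto
    ultimately have "Z m = 0"
      by auto
    then show ?thesis
      unfolding Z_def by simp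
  qed
qed

section \<open>The alternating expansion of the Irwin sums\<close>

lemma block_moment_le_0: "block_moment j m r \<le> block_moment j 0 r"
proof (induction m)
  case (Suc m)
  then show ?case using block_moment_Suc_le[of j m r] by linarith
qed simp

lemma block_moment_tendsto_0: "(\<lambda>m. block_moment j m r) \<longlonglongrightarrow> 0"
  unfolding block_moment_def block_term_def
proof (rule tendsto_null_sum)
  fix t assume "t \<in> {..<b^r}"
  then have "norm (real t / real b ^ r) < 1"
    using scaled_block_less_1 by simp
  from LIMSEQ_power_zero[OF this]
  show "(\<lambda>m. if digit_count_padded b d r t = j then (real t / real b ^ r) ^ m / real b ^ r else 0)
      \<longlonglongrightarrow> 0"
    by (cases "digit_count_padded b d r t = j") (auto intro: tendsto_divide_zero)
qed

lemma u_coef_tendsto_0: "(\<lambda>m. u_coef b d j m) \<longlonglongrightarrow> 0"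
proof -
  have "(\<lambda>m. \<Sum>r. block_moment j m r) \<longlonglongrightarrow> (\<Sum>r. 0 :: real)"
  proof (rule tannerys_theorem[where M="block_moment j 0", THEN conjunct2, THEN conjunct2])
    show "\<forall>\<^sub>F (r, m) in sequentially \<times>\<^sub>F sequentially. norm (block_moment j m r) \<le> block_moment j 0 r"
      by (rule always_eventually) (auto simp: block_moment_nonneg block_moment_le_0)
  qed (auto intro: block_moment_tendsto_0 summable_block_moment)
  then show ?thesis
    using sums_unique[OF block_moment_sums_u_coef] by simp
qed

definition block_reciprocal_sum :: "nat \<Rightarrow> real \<Rightarrow> nat \<Rightarrow> real" where
  "block_reciprocal_sum j x r =
     (\<Sum>t<b^r. if digit_count_padded b d r t = j then 1 / (x * real b ^ r + real t) else 0)"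

definition block_remainder :: "nat \<Rightarrow> real \<Rightarrow> nat \<Rightarrow> nat \<Rightarrow> real" where
  "block_remainder j x P r = (\<Sum>t<b^r. if digit_count_padded b d r t = j then
      (- (real t / real b ^ r / x)) ^ P / (real b ^ r * (x + real t / real b ^ r)) else 0)"

lemma block_reciprocal_expansion:
  assumes "1 \<le> x"
  shows "(\<Sum>p<P. (-1) ^ p * block_moment j p r / x ^ (p+1)) = block_reciprocal_sum j x r - block_remainder j x P r"
proof -
  have "(\<Sum>p<P. (-1) ^ p * block_moment j p r / x ^ (p+1)) =
      (\<Sum>t<b^r. \<Sum>p<P. (-1) ^ p * (if digit_count_padded b d r t = j
         then (real t / real b ^ r) ^ p / real b ^ r else 0) / x ^ (p+1))"
    unfolding block_moment_def block_term_def
    by (subst sum.swap) (simp add: sum_distrib_left sum_divide_distrib)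
  also have "\<dots> = (\<Sum>t<b^r. if digit_count_padded b d r t = j then 1 / (x * real b ^ r + real t) -
      (- (real t / real b ^ r / x)) ^ P / (real b ^ r * (x + real t / real b ^ r)) else 0)"
  proof (rule sum.cong[OF refl])
    fix t
    have "real b ^ r * (x + real t / real b ^ r) = x * real b ^ r + real t"
      using base_pos by (simp add: field_simps)
    then show "(\<Sum>p<P. (-1) ^ p * (if digit_count_padded b d r t = j
         then (real t / real b ^ r) ^ p / real b ^ r else 0) / x ^ (p+1))
      = (if digit_count_padded b d r t = j then 1 / (x * real b ^ r + real t) -
      (- (real t / real b ^ r / x)) ^ P / (real b ^ r * (x + real t / real b ^ r)) else 0)"
      using alternating_geometric_sum_remainder[OF assms, of "real t / real b ^ r" "real b ^ r" P] base_pos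
      by simp
  qed
  also have "\<dots> = block_reciprocal_sum j x r - block_remainder j x P r"
    unfolding block_reciprocal_sum_def block_remainder_def
    by (simp add: sum_subtractf[symmetric] if_distrib cong: if_cong)
  finally show ?thesis .
qed

lemma block_remainder_abs_le:
  assumes "1 \<le> x"
  shows "\<bar>block_remainder j x P r\<bar> \<le> block_moment j P r"
proof -
  have "\<bar>block_remainder j x P r\<bar> \<le> (\<Sum>t<b^r. \<bar>if digit_count_padded b d r t = j then
      (- (real t / real b ^ r / x)) ^ P / (real b ^ r * (x + real t / real b ^ r)) else 0\<bar>)"
    unfolding block_remainder_def by (rule sum_abs)
  also have "\<dots> \<le> block_moment j P r"
    unfolding block_moment_def block_term_def
  proof (rule sum_mono)
    fix t
    define q where "q = real t / real b ^ r"
    have B: "0 < real b ^ r"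
      using base_pos by simp
    have "0 \<le> q"
      unfolding q_def by simp
    have "\<bar>(- (q / x)) ^ P / (real b ^ r * (x + q))\<bar> = (q / x) ^ P / (real b ^ r * (x + q))"
      using \<open>0 \<le> q\<close> assms B by (simp add: power_abs abs_mult abs_divide)
    also have "\<dots> \<le> q ^ P / (real b ^ r * (x + q))"
      using \<open>0 \<le> q\<close> assms B
      by (intro divide_right_mono power_mono) (auto simp: divide_le_eq mult_le_cancel_left1 intro: mult_nonneg_nonneg)
    also have "\<dots> \<le> q ^ P / real b ^ r"
      using \<open>0 \<le> q\<close> assms B by (intro divide_left_mono) (auto simp: mult_le_cancel_left1 intro: mult_pos_pos)
    finally show "\<bar>if digit_count_padded b d r t = j then (- (real t / real b ^ r / x)) ^ P
        / (real b ^ r * (x + real t / real b ^ r)) else 0\<bar>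
       \<le> (if digit_count_padded b d r t = j then (real t / real b ^ r) ^ P / real b ^ r else 0)"
      unfolding q_def by simp
  qed
  finally show ?thesis .
qed

lemma block_reciprocal_sum_bounds:
  assumes "1 \<le> x"
  shows "0 \<le> block_reciprocal_sum j x r" "block_reciprocal_sum j x r \<le> block_moment j 0 r"
proof -
  have pos: "0 < x * real b ^ r + real t" for t
    using assms base_pos by (simp add: add_pos_nonneg)
  then show "0 \<le> block_reciprocal_sum j x r"
    unfolding block_reciprocal_sum_def by (intro sum_nonneg) (simp add: less_imp_le)
  show "block_reciprocal_sum j x r \<le> block_moment j 0 r"
    unfolding block_reciprocal_sum_def block_moment_def block_term_def
  proof (rule sum_mono)
    fix t
    have "real b ^ r \<le> x * real b ^ r"
      using assms by (simp add: mult_le_cancel_right1)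
    then have "1 / (x * real b ^ r + real t) \<le> 1 / real b ^ r"
      using pos[of t] base_pos by (intro divide_left_mono) (auto simp: add_increasing2)
    then show "(if digit_count_padded b d r t = j then 1 / (x * real b ^ r + real t) else 0)
        \<le> (if digit_count_padded b d r t = j then (real t / real b ^ r) ^ 0 / real b ^ r else 0)"
      by simp
  qed
qed

lemma summable_block_reciprocal_sum: "1 \<le> x \<Longrightarrow> summable (block_reciprocal_sum j x)"
  by (rule summable_comparison_test[OF _ summable_block_moment[of j 0]])
     (use block_reciprocal_sum_bounds in auto)

lemma summable_abs_block_remainder: "1 \<le> x \<Longrightarrow> summable (\<lambda>r. \<bar>block_remainder j x P r\<bar>)"
  by (rule summable_comparison_test[OF _ summable_block_moment[of j P]])
     (use block_remainder_abs_le in auto)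

text \<open>For \<open>x = 1\<close> the double series over \<open>r\<close> and \<open>p\<close> is not absolutely convergent, so the two
  summations cannot simply be exchanged; instead the remainder after \<open>P\<close> terms is bounded
  by \<open>u\<^sub>j\<^sub>;\<^sub>P\<close>, which tends to \<open>0\<close>.\<close>
lemma alternating_u_coef_sums:
  assumes "1 \<le> x"
  shows "(\<lambda>p. (-1) ^ p * u_coef b d j p / x ^ (p+1)) sums (\<Sum>r. block_reciprocal_sum j x r)"
proof -
  have partial_sum: "(\<Sum>p<P. (-1) ^ p * u_coef b d j p / x ^ (p+1)) =
      (\<Sum>r. block_reciprocal_sum j x r) - (\<Sum>r. block_remainder j x P r)" for P
  proof -
    have "(\<lambda>r. \<Sum>p<P. (-1) ^ p * block_moment j p r / x ^ (p+1)) sums (\<Sum>p<P. (-1) ^ p * u_coef b d j p / x ^ (p+1))"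
      by (intro sums_sum sums_divide sums_mult block_moment_sums_u_coef)
    moreover have "(\<lambda>r. \<Sum>p<P. (-1) ^ p * block_moment j p r / x ^ (p+1)) sums
        ((\<Sum>r. block_reciprocal_sum j x r) - (\<Sum>r. block_remainder j x P r))"
      unfolding block_reciprocal_expansion[OF assms]
      using summable_block_reciprocal_sum[OF assms] summable_abs_block_remainder[OF assms]
      by (intro sums_diff summable_sums) (auto dest: summable_rabs_cancel)
    ultimately show ?thesis
      by (rule sums_unique2)
  qed
  have "(\<lambda>P. \<Sum>r. block_remainder j x P r) \<longlonglongrightarrow> 0"
  proof (rule Lim_null_comparison[OF always_eventually u_coef_tendsto_0], intro allI)
    fix P
    have "\<bar>\<Sum>r. block_remainder j x P r\<bar> \<le> (\<Sum>r. \<bar>block_remainder j x P r\<bar>)"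
      by (rule summable_rabs[OF summable_abs_block_remainder[OF assms]])
    also have "\<dots> \<le> u_coef b d j P"
      by (rule sums_le[OF block_remainder_abs_le[OF assms]
          summable_sums[OF summable_abs_block_remainder[OF assms]] block_moment_sums_u_coef])
    finally show "norm (\<Sum>r. block_remainder j x P r) \<le> u_coef b d j P"
      by simp
  qed
  then have "(\<lambda>P. (\<Sum>r. block_reciprocal_sum j x r) - (\<Sum>r. block_remainder j x P r))
      \<longlonglongrightarrow> (\<Sum>r. block_reciprocal_sum j x r) - 0"
    by (intro tendsto_diff tendsto_const)
  then show ?thesis
    unfolding sums_def partial_sum by simp
qed

definition irwin_term :: "nat \<Rightarrow> nat \<Rightarrow> real" where
  "irwin_term k n = (if 1 \<le> n \<and> digit_count b d n = k then 1 / real n else 0)"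

lemma irwin_term_block:
  assumes "0 < n"
  shows "(\<Sum>t<b^r. irwin_term k (n * b^r + t)) =
    (if digit_count b d n \<le> k then block_reciprocal_sum (k - digit_count b d n) (real n) r else 0)"
proof -
  have "irwin_term k (n * b^r + t) = (if digit_count b d n \<le> k then
      (if digit_count_padded b d r t = k - digit_count b d n then 1 / (real n * real b ^ r + real t) else 0) else 0)"
    if "t < b^r" for t
  proof -
    have "1 \<le> n * b ^ r + t"
      using assms base_pos by (simp add: Suc_le_eq)
    then show ?thesis
      unfolding irwin_term_def digit_count_append[OF assms that] by auto
  qed
  then show ?thesis
    unfolding block_reciprocal_sum_def by (auto intro: sum.cong)
qed

lemma irwin_term_partial_sums:
  assumes "1 \<le> l"
  shows "(\<Sum>n<b^(l-1) * b^R. irwin_term k n) =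
    (\<Sum>n\<in>{n. 0 < n \<and> n < b ^ (l - 1) \<and> digit_count b d n = k}. 1 / real n) +
    (\<Sum>r<R. \<Sum>n\<in>{n. b ^ (l - 1) \<le> n \<and> n < b ^ l \<and> digit_count b d n \<le> k}.
       block_reciprocal_sum (k - digit_count b d n) (real n) r)"
proof (induction R)
  case 0
  have low: "{n. 0 < n \<and> n < b ^ (l - 1) \<and> digit_count b d n = k} =
      {n \<in> {..<b^(l-1)}. 1 \<le> n \<and> digit_count b d n = k}"
    by auto
  show ?case
    unfolding irwin_term_def low sum.inter_filter[OF finite_lessThan] by simp
next
  case (Suc R)
  have high: "b ^ l = b ^ (l - 1) * b"
    using assms by (simp add: power_eq_if mult.commute)
  then have low_le_high: "b ^ (l - 1) \<le> b ^ l"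
    using base_pos by simp
  have "(\<Sum>n<b ^ (l - 1) * b ^ Suc R. irwin_term k n) =
      (\<Sum>n<b ^ (l - 1) * b ^ R. irwin_term k n) + (\<Sum>n\<in>{b ^ (l - 1) * b ^ R..<b ^ l * b ^ R}. irwin_term k n)"
    using low_le_high unfolding high lessThan_atLeast0 by (simp add: sum.atLeastLessThan_concat mult_ac)
  also have "(\<Sum>n\<in>{b ^ (l - 1) * b ^ R..<b ^ l * b ^ R}. irwin_term k n) =
      (\<Sum>n\<in>{b ^ (l - 1)..<b ^ l}. \<Sum>t<b ^ R. irwin_term k (n * b ^ R + t))"
    by (rule sum_atLeastLessThan_mult_blocks[OF low_le_high])
  also have "\<dots> = (\<Sum>n\<in>{b ^ (l - 1)..<b ^ l}. if digit_count b d n \<le> k then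
      block_reciprocal_sum (k - digit_count b d n) (real n) R else 0)"
    using base_pos by (intro sum.cong refl irwin_term_block) (auto intro: less_le_trans[of 0 "b ^ (l - 1)"])
  also have "\<dots> = (\<Sum>n\<in>{n. b ^ (l - 1) \<le> n \<and> n < b ^ l \<and> digit_count b d n \<le> k}.
      block_reciprocal_sum (k - digit_count b d n) (real n) R)"
    by (simp add: sum.inter_filter[symmetric] Collect_conj_eq[symmetric] conj_assoc)
  finally show ?case
    using Suc.IH by simp
qed

lemma irwin_sum_decomposition:
  assumes "1 \<le> l"
  shows "irwin_sum b d k =
    (\<Sum>n\<in>{n. 0 < n \<and> n < b ^ (l - 1) \<and> digit_count b d n = k}. 1 / real n) +
    (\<Sum>n\<in>{n. b ^ (l - 1) \<le> n \<and> n < b ^ l \<and> digit_count b d n \<le> k}.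
       \<Sum>r. block_reciprocal_sum (k - digit_count b d n) (real n) r)"
proof -
  let ?prefixes = "{n. b ^ (l - 1) \<le> n \<and> n < b ^ l \<and> digit_count b d n \<le> k}"
  have "1 \<le> real n" if "n \<in> ?prefixes" for n
    using that base_pos by (simp add: Suc_le_eq less_le_trans[of 0 "b ^ (l - 1)"])
  then have "(\<lambda>r. \<Sum>n\<in>?prefixes. block_reciprocal_sum (k - digit_count b d n) (real n) r) sums
      (\<Sum>n\<in>?prefixes. \<Sum>r. block_reciprocal_sum (k - digit_count b d n) (real n) r)"
    by (intro sums_sum summable_sums summable_block_reciprocal_sum)
  then have "(\<lambda>R. \<Sum>n<b^(l-1) * b^R. irwin_term k n) \<longlonglongrightarrow>
      (\<Sum>n\<in>{n. 0 < n \<and> n < b ^ (l - 1) \<and> digit_count b d n = k}. 1 / real n) +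
      (\<Sum>n\<in>?prefixes. \<Sum>r. block_reciprocal_sum (k - digit_count b d n) (real n) r)"
    unfolding irwin_term_partial_sums[OF assms] sums_def by (intro tendsto_add tendsto_const)
  moreover have "strict_mono (\<lambda>R. b^(l-1) * b^R)"
    unfolding strict_mono_Suc_iff using base_ge_2 by simp
  ultimately have "irwin_term k sums
      ((\<Sum>n\<in>{n. 0 < n \<and> n < b ^ (l - 1) \<and> digit_count b d n = k}. 1 / real n) +
       (\<Sum>n\<in>?prefixes. \<Sum>r. block_reciprocal_sum (k - digit_count b d n) (real n) r))"
    by (intro sums_if_nonneg_subseq_partial_sums) (auto simp: irwin_term_def)
  then show ?thesis
    unfolding irwin_sum_def irwin_term_def by (rule sums_unique[symmetric])
qed

lemma irwin_sum_expansion: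
  assumes "1 \<le> l"
  shows "(\<lambda>m. if m = 0 then 0
           else (-1) ^ m * (\<Sum>n\<in>{n. b ^ (l - 1) \<le> n \<and> n < b ^ l \<and> digit_count b d n \<le> k}.
                    u_coef b d (k - digit_count b d n) m / real n ^ (m + 1)))
     sums (irwin_sum b d k
           - (\<Sum>n\<in>{n. 0 < n \<and> n < b ^ (l - 1) \<and> digit_count b d n = k}. 1 / real n)
           - real b * (\<Sum>n\<in>{n. b ^ (l - 1) \<le> n \<and> n < b ^ l \<and> digit_count b d n \<le> k}. 1 / real n))"
proof -
  let ?prefixes = "{n. b ^ (l - 1) \<le> n \<and> n < b ^ l \<and> digit_count b d n \<le> k}"
  define \<phi> where "\<phi> m = (\<Sum>n\<in>?prefixes. (-1) ^ m * u_coef b d (k - digit_count b d n) m / real n ^ (m + 1))"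
    for m
  have "1 \<le> real n" if "n \<in> ?prefixes" for n
    using that base_pos by (simp add: Suc_le_eq less_le_trans[of 0 "b ^ (l - 1)"])
  then have "\<phi> sums (\<Sum>n\<in>?prefixes. \<Sum>r. block_reciprocal_sum (k - digit_count b d n) (real n) r)"
    unfolding \<phi>_def by (intro sums_sum alternating_u_coef_sums)
  then have "(\<lambda>m. if m \<in> {0} then 0 else \<phi> m) sums
      ((\<Sum>n\<in>?prefixes. \<Sum>r. block_reciprocal_sum (k - digit_count b d n) (real n) r) - \<phi> 0)"
    by (rule sums_If_finite_set') simp_all
  moreover have "(\<Sum>n\<in>?prefixes. \<Sum>r. block_reciprocal_sum (k - digit_count b d n) (real n) r) - \<phi> 0 =
      irwin_sum b d k - (\<Sum>n\<in>{n. 0 < n \<and> n < b ^ (l - 1) \<and> digit_count b d n = k}. 1 / real n)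
      - real b * (\<Sum>n\<in>?prefixes. 1 / real n)"
    unfolding irwin_sum_decomposition[OF assms] \<phi>_def by (simp add: u_coef_0 sum_distrib_left)
  moreover have "(\<lambda>m. if m \<in> {0} then 0 else \<phi> m) = (\<lambda>m. if m = 0 then 0
      else (-1) ^ m * (\<Sum>n\<in>?prefixes. u_coef b d (k - digit_count b d n) m / real n ^ (m + 1)))"
    unfolding \<phi>_def by (rule ext) (simp add: sum_distrib_left cong: if_cong)
  ultimately show ?thesis
    by simp
qed

end

theorem mainTheorem1:
  fixes b d :: nat
  assumes "2 \<le> b" and "d < b"
  shows "(\<forall>k l. 1 \<le> l \<longrightarrow>
           (\<lambda>m. if m = 0 then 0
                 else (-1) ^ m * (\<Sum>n\<in>{n. b ^ (l - 1) \<le> n \<and> n < b ^ l \<and> digit_count b d n \<le> k}.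
                          u_coef b d (k - digit_count b d n) m / real n ^ (m + 1)))
           sums (irwin_sum b d k
                 - (\<Sum>n\<in>{n. 0 < n \<and> n < b ^ (l - 1) \<and> digit_count b d n = k}. 1 / real n)
                 - real b * (\<Sum>n\<in>{n. b ^ (l - 1) \<le> n \<and> n < b ^ l \<and> digit_count b d n \<le> k}. 1 / real n)))
       \<and> (\<forall>j m. 1 \<le> m \<longrightarrow> 0 \<le> u_coef b d j m \<and>
                 (u_coef b d j m = 0 \<longrightarrow> j = 0 \<and> b = 2 \<and> d = 1))
       \<and> (\<forall>j m. u_coef b d j (m + 1) \<le> u_coef b d j m \<and>
                 (u_coef b d j (m + 1) < u_coef b d j m \<or>
                  (u_coef b d j (m + 1) = 0 \<and> u_coef b d j m = 0)))
       \<and> (\<forall>m. 1 \<le> m \<longrightarrow> strict_mono (\<lambda>j. u_coef b d j m) \<and>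
                 (\<lambda>j. u_coef b d j m) \<longlonglongrightarrow> real b / real (m + 1))"
proof -
  interpret irwin_base b d
    using assms by unfold_locales
  have positivity: "0 \<le> u_coef b d j m \<and> (u_coef b d j m = 0 \<longrightarrow> j = 0 \<and> b = 2 \<and> d = 1)"
    if "1 \<le> m" for j m
    using u_coef_nonneg[of j m] u_coef_pos[OF that, of j] by (metis order_less_irrefl)
  have decreasing: "u_coef b d j (m + 1) \<le> u_coef b d j m \<and>
      (u_coef b d j (m + 1) < u_coef b d j m \<or> (u_coef b d j (m + 1) = 0 \<and> u_coef b d j m = 0))" for j m
    using u_coef_Suc_le[of j m] u_coef_Suc_less[of j m] u_coef_nonneg[of j m] u_coef_nonneg[of j "Suc m"]
    by (cases "0 < u_coef b d j m") auto
  have levels: "strict_mono (\<lambda>j. u_coef b d j m) \<and> (\<lambda>j. u_coef b d j m) \<longlonglongrightarrow> real b / real (m + 1)"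
    if "1 \<le> m" for m
    using u_coef_less_Suc_level[OF that] u_coef_tendsto_limit[of m]
    unfolding u_limit_eq by (simp add: strict_mono_Suc_iff)
  show ?thesis
    using irwin_sum_expansion positivity decreasing levels by blast
qed

end
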